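(* Let $\mathbb F$ be any field, $n\ge k\ge 1$, and let $\mathcal K\subseteq M_{n\times k}(\mathbb F)$ be a linear variety such that $\det_{n,k}(X)=0$ for every $X\in\mathcal K$. Then $\operatorname{codim}(\mathcal K)\ge k$.
   Context: A linear variety in a finite-dimensional space $W$ is a nonempty set of the form $\mathbf s+V$ with $V\subseteq W$ a linear subspace (uniquely determined); $\operatorname{codim}\mathcal K=\dim W-\dim V$, here $W=M_{n\times k}(\mathbb F)$. Cullis' determinant: for $n\ge k$ and $X\in M_{n\times k}(\mathbb F)$, $\det_{n,k}(X)=\sum_{c}\operatorname{sgn}(c)\det\big(X[c|)\big)$, where $c$ ranges over the $k$-element subsets of $[n]$, $X[c|)$ is the $k\times k$ submatrix formed by the rows indexed by $c$ (in increasing order), and for $c=\{c(1)<\dots<c(k)\}$, $\operatorname{sgn}(c)=(-1)^{\sum_{\alpha=1}^k (c(\alpha)-\alpha)}$. *)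

theory Defs
  imports Jordan_Normal_Form.VS_Connect Jordan_Normal_Form.DL_Submatrix
begin

(* Matrices in M_{n x k}(F) are elements of carrier_mat n k (rows/columns indexed from 0).
   The F-vector space M_{n x k}(F) is  module_mat TYPE('a) n k  over  class_ring. *)

(* sgn(c) = (-1)^(sum_{alpha} (c(alpha) - alpha)), with c(0) < ... < c(k-1) the
   elements of c in increasing order (0-indexed; the sum is the same as 1-indexed). *)
definition cullis_sgn :: "nat set \<Rightarrow> nat \<Rightarrow> 'a :: comm_ring_1" where
  "cullis_sgn c k = (-1) ^ (\<Sum>\<alpha><k. pick c \<alpha> - \<alpha>)"

definition cullis_det :: "nat \<Rightarrow> nat \<Rightarrow> 'a :: comm_ring_1 mat \<Rightarrow> 'a" where
  "cullis_det n k X =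
     (\<Sum>c \<in> {c. c \<subseteq> {..<n} \<and> card c = k}. cullis_sgn c k * det (submatrix X c {..<k}))"

definition codim_mat :: "'a :: field itself \<Rightarrow> nat \<Rightarrow> nat \<Rightarrow> 'a mat set \<Rightarrow> nat" where
  "codim_mat ty n k V =
     n * k - vectorspace.dim (class_ring :: 'a ring) ((module_mat TYPE('a) n k)\<lparr>carrier := V\<rparr>)"

end

theory Submission
  imports Defs
begin

(* Since codim V < k, V contains a nonzero matrix supported on the last row; a column change
   X |-> X P (which multiplies Cullis' determinant by det P) turns it into the corner unit E,
   chosen so that V also misses some matrix that vanishes once the last row and column are
   deleted (unless V is everything).  Deleting the last row and column therefore lowers the
   codimension by one, and by induction some X in s + V has a nonzero reduced Cullis
   determinant.  Expanding along the corner,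
     det_{n+1,k+1}(X + t E) = det_{n+1,k+1}(X) +- t det_{n,k}(X with last row and column deleted),
   so X or X + E lies in s + V and has nonzero Cullis determinant. *)

lemma pick_lessThan: "i < k \<Longrightarrow> pick {..<k} i = i"
  using pick_reduce_set[of i k UNIV] by (simp add: pick_UNIV lessThan_def)

lemma pick_insert_greater:
  assumes "\<forall>x\<in>c. x < n" and "a < card c"
  shows "pick (insert n c) a = pick c a"
proof -
  have "{x. x < n \<and> x \<in> insert n c} = c" using assms(1) by auto
  then show ?thesis using pick_reduce_set[of a n "insert n c"] assms(2) by simp
qed

lemma pick_insert_greater_last:
  assumes "finite c" and "\<forall>x\<in>c. x < n"
  shows "pick (insert n c) (card c) = n"
proof -
  have "{x \<in> insert n c. x < n} = c" using assms(2) by auto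
  then show ?thesis using pick_card_in_set[of n "insert n c"] by simp
qed

lemma pick_eq_last_iff:
  assumes c: "c \<subseteq> {..<Suc n}" "card c = Suc k" and a: "a < Suc k"
  shows "pick c a = n \<longleftrightarrow> n \<in> c \<and> a = k"
proof (cases "n \<in> c")
  case True
  have fin: "finite (c - {n})" "\<forall>x\<in>c - {n}. x < n" using c by (auto intro: finite_subset)
  have "insert n (c - {n}) = c" "card (c - {n}) = k" using True c by auto
  then have last: "pick c k = n" using pick_insert_greater_last[OF fin] by metis
  have "pick c a < pick c k" if "a < k" using pick_mono_le[of k c a] that c by simp
  then show ?thesis using last a True by (cases "a = k") auto
next
  case False
  then show ?thesis using pick_in_set_le[of a c] a c by auto
qed

lemma submatrix_rows:
  assumes "X \<in> carrier_mat n k" and "c \<subseteq> {..<n}"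
  shows "submatrix X c {..<k} = mat (card c) k (\<lambda>(a, b). X $$ (pick c a, b))"
proof -
  have "{i. i < n \<and> i \<in> c} = c" "{j. j < k \<and> j \<in> {..<k}} = {..<k}"
    using assms(2) by auto
  then show ?thesis
    using assms(1) by (intro eq_matI) (auto simp: submatrix_def pick_lessThan)
qed

lemma cullis_det_0 [simp]: "cullis_det n 0 X = 1"
proof -
  have "{c. c \<subseteq> {..<n} \<and> card c = 0} = {{}}"
    by (auto dest: finite_subset[OF _ finite_lessThan])
  moreover have "submatrix X {} {..<0} = 1\<^sub>m 0"
    by (rule eq_matI) (auto simp: dim_submatrix)
  ultimately show ?thesis unfolding cullis_det_def cullis_sgn_def by simp
qed

lemma submatrix_mult:
  assumes X: "X \<in> carrier_mat n k" and P: "P \<in> carrier_mat k k" and c: "c \<subseteq> {..<n}"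
  shows "submatrix (X * P) c {..<k} = submatrix X c {..<k} * P"
proof -
  have "pick c a < n" if "a < card c" for a
    using pick_in_set_le[OF that] c by auto
  then show ?thesis
    using X P c unfolding submatrix_rows[OF X c] submatrix_rows[OF mult_carrier_mat[OF X P] c]
    by (intro eq_matI) (auto simp: scalar_prod_def)
qed

lemma cullis_det_mult:
  assumes X: "X \<in> carrier_mat n k" and P: "P \<in> carrier_mat k k"
  shows "cullis_det n k (X * P) = cullis_det n k X * det P"
  unfolding cullis_det_def sum_distrib_right
proof (intro sum.cong refl)
  fix c assume "c \<in> {c. c \<subseteq> {..<n} \<and> card c = k}"
  then have c: "c \<subseteq> {..<n}" "card c = k" by auto
  have "submatrix X c {..<k} \<in> carrier_mat k k"
    using c by (simp add: submatrix_rows[OF X c(1)])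
  then show "cullis_sgn c k * det (submatrix (X * P) c {..<k}) =
      cullis_sgn c k * det (submatrix X c {..<k}) * det P"
    by (simp add: submatrix_mult[OF X P c(1)] det_mult[OF _ P])
qed

definition row_mat :: "nat \<Rightarrow> nat \<Rightarrow> nat \<Rightarrow> 'a :: zero vec \<Rightarrow> 'a mat" where
  "row_mat n k i w = mat n k (\<lambda>(r, j). if r = i then w $ j else 0)"

abbreviation single_mat :: "nat \<Rightarrow> nat \<Rightarrow> nat \<Rightarrow> nat \<Rightarrow> 'a :: zero_neq_one mat" where
  "single_mat n k i j \<equiv> row_mat n k i (unit_vec k j)"

lemma row_mat_carrier [simp]: "row_mat n k i w \<in> carrier_mat n k"
  and dim_row_mat [simp]: "dim_row (row_mat n k i w) = n" "dim_col (row_mat n k i w) = k"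
  by (simp_all add: row_mat_def)

lemma index_row_mat [simp]:
  "r < n \<Longrightarrow> j < k \<Longrightarrow> row_mat n k i w $$ (r, j) = (if r = i then w $ j else 0)"
  by (simp add: row_mat_def)

lemma row_row_mat:
  assumes "r < n" and "w \<in> carrier_vec k"
  shows "row (row_mat n k i w) r = (if r = i then w else 0\<^sub>v k)"
  using assms by (intro eq_vecI) auto

lemma single_mat_mult:
  fixes B :: "'a :: semiring_1 mat"
  assumes "B \<in> carrier_mat k k" and "j < k"
  shows "single_mat n k i j * B = row_mat n k i (row B j)"
  using assms by (intro eq_matI) (auto simp: row_row_mat)

lemma index_mat_delete_last [simp]:
  "X \<in> carrier_mat (Suc n) (Suc k) \<Longrightarrow> i < n \<Longrightarrow> j < k \<Longrightarrow> mat_delete X n k $$ (i, j) = X $$ (i, j)"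
  by (simp add: mat_delete_def)

lemma mat_delete_add:
  assumes "X \<in> carrier_mat (Suc n) (Suc k)" and "Y \<in> carrier_mat (Suc n) (Suc k)"
  shows "mat_delete (X + Y) n k = mat_delete X n k + mat_delete Y n k"
  using assms by (intro eq_matI) (auto simp: mat_delete_def)

lemma mat_delete_surj:
  fixes Y :: "'a :: zero mat"
  assumes "Y \<in> carrier_mat n k"
  shows "\<exists>X\<in>carrier_mat (Suc n) (Suc k). mat_delete X n k = Y"
proof
  let ?X = "mat (Suc n) (Suc k) (\<lambda>(i, j). if i < n \<and> j < k then Y $$ (i, j) else 0)"
  show "?X \<in> carrier_mat (Suc n) (Suc k)" by simp
  show "mat_delete ?X n k = Y" using assms by (intro eq_matI) (auto simp: mat_delete_def)
qed

lemma mat_delete_eq_0: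
  assumes "X \<in> carrier_mat (Suc n) (Suc k)" and "\<And>i j. i < n \<Longrightarrow> j < k \<Longrightarrow> X $$ (i, j) = 0"
  shows "mat_delete X n k = 0\<^sub>m n k"
  using assms by (intro eq_matI) (auto simp: mat_delete_def)

lemma det_add_corner:
  assumes M: "M \<in> carrier_mat (Suc k) (Suc k)"
  shows "det (M + t \<cdot>\<^sub>m single_mat (Suc k) (Suc k) k k) = det M + t * det (mat_delete M k k)"
proof -
  let ?M = "M + t \<cdot>\<^sub>m single_mat (Suc k) (Suc k) k k"
  have M': "?M \<in> carrier_mat (Suc k) (Suc k)" using M by simp
  have "mat_delete ?M i k = mat_delete M i k" for i
    using M unfolding mat_delete_def by (intro eq_matI) auto
  then have "cofactor ?M i k = cofactor M i k" for i by (simp add: cofactor_def)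
  then have "det ?M = (\<Sum>i<Suc k. M $$ (i, k) * cofactor M i k) + t * cofactor M k k"
    using M by (simp add: laplace_expansion_column[OF M', of k] sum.distrib distrib_right
        if_distrib[of "\<lambda>x. x * _"] cong: if_cong)
  also have "(\<Sum>i<Suc k. M $$ (i, k) * cofactor M i k) = det M"
    by (rule laplace_expansion_column[OF M, symmetric]) simp
  finally show ?thesis by (simp add: cofactor_def)
qed

lemma submatrix_add_corner:
  fixes X :: "'a :: comm_ring_1 mat"
  assumes X: "X \<in> carrier_mat (Suc n) (Suc k)" and c: "c \<subseteq> {..<Suc n}" "card c = Suc k"
  shows "submatrix (X + t \<cdot>\<^sub>m single_mat (Suc n) (Suc k) n k) c {..<Suc k} =
    submatrix X c {..<Suc k} + (if n \<in> c then t else 0) \<cdot>\<^sub>m single_mat (Suc k) (Suc k) k k"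
proof -
  have XE: "X + t \<cdot>\<^sub>m single_mat (Suc n) (Suc k) n k \<in> carrier_mat (Suc n) (Suc k)"
    using X by simp
  have "pick c a < Suc n" if "a < Suc k" for a using pick_in_set_le[of a c] that c by auto
  then show ?thesis
    using X c pick_eq_last_iff[OF c]
    unfolding submatrix_rows[OF X c(1)] submatrix_rows[OF XE c(1)]
    by (intro eq_matI) auto
qed

lemma mat_delete_submatrix_insert:
  assumes X: "X \<in> carrier_mat (Suc n) (Suc k)" and c: "c \<subseteq> {..<n}" "card c = k"
  shows "mat_delete (submatrix X (insert n c) {..<Suc k}) k k = submatrix (mat_delete X n k) c {..<k}"
proof -
  have c': "insert n c \<subseteq> {..<Suc n}" "card (insert n c) = Suc k"
    using c by (auto simp: finite_subset card_insert_if)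
  have X': "mat_delete X n k \<in> carrier_mat n k" using mat_delete_carrier[OF X] by simp
  have "pick c a < n" if "a < k" for a using pick_in_set_le[of a c] that c by auto
  moreover have "\<forall>x\<in>c. x < n" using c by auto
  ultimately show ?thesis
    using X c pick_insert_greater[of c n]
    unfolding submatrix_rows[OF X c'(1)] submatrix_rows[OF X' c(1)]
    by (intro eq_matI) (auto simp: mat_delete_def c'(2))
qed

lemma cullis_sgn_insert_greater:
  assumes c: "c \<subseteq> {..<n}" "card c = k" and "k \<le> n"
  shows "cullis_sgn (insert n c) (Suc k) = ((-1) ^ (n - k) :: 'a :: comm_ring_1) * cullis_sgn c k"
proof -
  have c': "finite c" "\<forall>x\<in>c. x < n" using c by (auto intro: finite_subset)
  have "(\<Sum>\<alpha><Suc k. pick (insert n c) \<alpha> - \<alpha>) = (\<Sum>\<alpha><k. pick c \<alpha> - \<alpha>) + (n - k)"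
    using pick_insert_greater[OF c'(2)] pick_insert_greater_last[OF c'] c(2) by simp
  then show ?thesis unfolding cullis_sgn_def by (simp add: power_add mult.commute)
qed

lemma bij_betw_insert_greater_subsets:
  "bij_betw (insert n) {c. c \<subseteq> {..<n} \<and> card c = k}
     {c. c \<subseteq> {..<Suc n} \<and> card c = Suc k \<and> n \<in> c}"
proof (rule bij_betw_byWitness[where f' = "\<lambda>c. c - {n}"])
  show "(\<lambda>c. c - {n}) ` {c. c \<subseteq> {..<Suc n} \<and> card c = Suc k \<and> n \<in> c} \<subseteq> {c. c \<subseteq> {..<n} \<and> card c = k}"
    by (auto simp: finite_subset less_Suc_eq)
  show "insert n ` {c. c \<subseteq> {..<n} \<and> card c = k} \<subseteq> {c. c \<subseteq> {..<Suc n} \<and> card c = Suc k \<and> n \<in> c}"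
    by (auto simp: finite_subset card_insert_if)
qed auto

lemma cullis_det_add_corner:
  fixes X :: "'a :: comm_ring_1 mat"
  assumes X: "X \<in> carrier_mat (Suc n) (Suc k)" and "k \<le> n"
  shows "cullis_det (Suc n) (Suc k) (X + t \<cdot>\<^sub>m single_mat (Suc n) (Suc k) n k) =
    cullis_det (Suc n) (Suc k) X + t * (-1) ^ (n - k) * cullis_det n k (mat_delete X n k)"
proof -
  let ?S = "{c. c \<subseteq> {..<Suc n} \<and> card c = Suc k}"
  let ?m = "\<lambda>c. cullis_sgn c (Suc k) * det (mat_delete (submatrix X c {..<Suc k}) k k)"
  have fin: "finite ?S" by (rule finite_subset[of _ "Pow {..<Suc n}"]) auto
  have "cullis_det (Suc n) (Suc k) (X + t \<cdot>\<^sub>m single_mat (Suc n) (Suc k) n k) =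
      (\<Sum>c\<in>?S. cullis_sgn c (Suc k) * det (submatrix X c {..<Suc k}) + (if n \<in> c then t * ?m c else 0))"
    unfolding cullis_det_def
  proof (intro sum.cong refl)
    fix c assume "c \<in> ?S"
    then have c: "c \<subseteq> {..<Suc n}" "card c = Suc k" by auto
    have "submatrix X c {..<Suc k} \<in> carrier_mat (Suc k) (Suc k)"
      using c by (simp add: submatrix_rows[OF X c(1)])
    then show "cullis_sgn c (Suc k) * det (submatrix (X + t \<cdot>\<^sub>m single_mat (Suc n) (Suc k) n k) c {..<Suc k}) =
        cullis_sgn c (Suc k) * det (submatrix X c {..<Suc k}) + (if n \<in> c then t * ?m c else 0)"
      by (simp add: submatrix_add_corner[OF X c] det_add_corner algebra_simps)
  qed
  also have "\<dots> = cullis_det (Suc n) (Suc k) X + t * (\<Sum>c\<in>{c\<in>?S. n \<in> c}. ?m c)"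
    by (simp add: sum.distrib sum.inter_filter[OF fin, symmetric] sum_distrib_left cullis_det_def)
  also have "(\<Sum>c\<in>{c\<in>?S. n \<in> c}. ?m c) = (\<Sum>c\<in>{c. c \<subseteq> {..<n} \<and> card c = k}. ?m (insert n c))"
    using sum.reindex_bij_betw[OF bij_betw_insert_greater_subsets, of ?m] by (simp add: conj_assoc)
  also have "\<dots> = (-1) ^ (n - k) * cullis_det n k (mat_delete X n k)"
    unfolding cullis_det_def sum_distrib_left
    by (intro sum.cong refl)
      (simp add: mat_delete_submatrix_insert[OF X] cullis_sgn_insert_greater[OF _ _ \<open>k \<le> n\<close>])
  finally show ?thesis by (simp add: algebra_simps)
qed

definition lincomb_mat :: "nat \<Rightarrow> nat \<Rightarrow> 'b set \<Rightarrow> ('b \<Rightarrow> 'a :: comm_ring_1 mat) \<Rightarrow> ('b \<Rightarrow> 'a) \<Rightarrow> 'a mat" where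
  "lincomb_mat n k L g a = mat n k (\<lambda>(i, j). \<Sum>l\<in>L. a l * g l $$ (i, j))"

definition mat_subspace :: "nat \<Rightarrow> nat \<Rightarrow> 'a :: comm_ring_1 mat set \<Rightarrow> bool" where
  "mat_subspace n k V \<longleftrightarrow> V \<subseteq> carrier_mat n k \<and> 0\<^sub>m n k \<in> V \<and>
     (\<forall>x\<in>V. \<forall>y\<in>V. x + y \<in> V) \<and> (\<forall>a. \<forall>x\<in>V. a \<cdot>\<^sub>m x \<in> V)"

text \<open>A witness of \<open>spans_modulo n k V L g\<close> with \<open>card L = c\<close> certifies that the subspace \<open>V\<close>
  of the \<open>n \<times> k\<close> matrices has codimension at most \<open>c\<close>.\<close>

definition spans_modulo :: "nat \<Rightarrow> nat \<Rightarrow> 'a :: comm_ring_1 mat set \<Rightarrow> 'b set \<Rightarrow> ('b \<Rightarrow> 'a mat) \<Rightarrow> bool" where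
  "spans_modulo n k V L g \<longleftrightarrow> g ` L \<subseteq> carrier_mat n k \<and>
     (\<forall>Y\<in>carrier_mat n k. \<exists>v\<in>V. \<exists>a. Y = v + lincomb_mat n k L g a)"

lemma lincomb_mat_carrier [simp]: "lincomb_mat n k L g a \<in> carrier_mat n k"
  and dim_lincomb_mat [simp]: "dim_row (lincomb_mat n k L g a) = n" "dim_col (lincomb_mat n k L g a) = k"
  by (simp_all add: lincomb_mat_def)

lemma index_lincomb_mat [simp]:
  "i < n \<Longrightarrow> j < k \<Longrightarrow> lincomb_mat n k L g a $$ (i, j) = (\<Sum>l\<in>L. a l * g l $$ (i, j))"
  by (simp add: lincomb_mat_def)

lemma mat_subspaceD:
  assumes "mat_subspace n k V"
  shows "V \<subseteq> carrier_mat n k" and "0\<^sub>m n k \<in> V"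
    and "x \<in> V \<Longrightarrow> y \<in> V \<Longrightarrow> x + y \<in> V" and "x \<in> V \<Longrightarrow> a \<cdot>\<^sub>m x \<in> V"
  using assms by (auto simp: mat_subspace_def)

lemma spans_moduloE:
  assumes "spans_modulo n k V L g" and "Y \<in> carrier_mat n k"
  obtains v a where "v \<in> V" and "Y = v + lincomb_mat n k L g a"
  using assms by (auto simp: spans_modulo_def)

lemma mat_subspace_lincomb:
  assumes V: "mat_subspace n k V" and "finite L" and "g ` L \<subseteq> V"
  shows "lincomb_mat n k L g a \<in> V"
  using assms(2,3)
proof (induction L rule: finite_induct)
  case empty
  have "lincomb_mat n k {} g a = 0\<^sub>m n k" by (intro eq_matI) auto
  then show ?case using mat_subspaceD(2)[OF V] by simp
next
  case (insert l L)
  have gl: "g l \<in> carrier_mat n k" using insert.prems mat_subspaceD(1)[OF V] by auto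
  have "lincomb_mat n k (insert l L) g a = a l \<cdot>\<^sub>m g l + lincomb_mat n k L g a"
    using insert.hyps gl by (intro eq_matI) auto
  then show ?case using insert V by (auto intro: mat_subspaceD)
qed

lemma lincomb_single_mats:
  assumes Y: "Y \<in> carrier_mat n k"
  shows "lincomb_mat n k ({..<n} \<times> {..<k}) (\<lambda>(i, j). single_mat n k i j) (\<lambda>(i, j). Y $$ (i, j)) = Y"
proof (rule eq_matI)
  fix r c assume "r < dim_row Y" "c < dim_col Y"
  then have rc: "(r, c) \<in> {..<n} \<times> {..<k}" using Y by auto
  have "(\<Sum>(i, j)\<in>{..<n} \<times> {..<k}. Y $$ (i, j) * single_mat n k i j $$ (r, c)) =
      (\<Sum>p\<in>{..<n} \<times> {..<k}. if p = (r, c) then Y $$ (r, c) else 0)"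
    using rc by (intro sum.cong refl) (auto simp: unit_vec_def split: prod.split)
  then show "lincomb_mat n k ({..<n} \<times> {..<k}) (\<lambda>(i, j). single_mat n k i j) (\<lambda>(i, j). Y $$ (i, j)) $$ (r, c) = Y $$ (r, c)"
    using rc by (simp add: split_beta)
qed (use Y in auto)

lemma mat_subspace_eq_carrierI:
  assumes V: "mat_subspace n k V" and single: "\<And>i j. i < n \<Longrightarrow> j < k \<Longrightarrow> single_mat n k i j \<in> V"
  shows "V = carrier_mat n k"
proof
  show "carrier_mat n k \<subseteq> V"
  proof
    fix Y :: "'a mat" assume Y: "Y \<in> carrier_mat n k"
    have "lincomb_mat n k ({..<n} \<times> {..<k}) (\<lambda>(i, j). single_mat n k i j) (\<lambda>(i, j). Y $$ (i, j)) \<in> V"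
      using single by (intro mat_subspace_lincomb[OF V]) auto
    then show "Y \<in> V" unfolding lincomb_single_mats[OF Y] .
  qed
qed (rule mat_subspaceD(1)[OF V])

lemma exists_nonzero_solution:
  fixes C :: "'b \<Rightarrow> nat \<Rightarrow> 'a :: field"
  assumes "finite L" and "card L < k"
  shows "\<exists>w\<in>carrier_vec k. w \<noteq> 0\<^sub>v k \<and> (\<forall>l\<in>L. (\<Sum>m<k. C l m * w $ m) = 0)"
proof -
  obtain h where h: "bij_betw h {0..<card L} L" using ex_bij_betw_nat_finite[OF assms(1)] by blast
  define A where "A = mat k k (\<lambda>(r, m). if r < card L then C (h r) m else 0)"
  have A: "A \<in> carrier_mat k k" by (simp add: A_def)
  have "det A = (\<Sum>m<k. A $$ (k - 1, m) * cofactor A (k - 1) m)"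
    using assms(2) by (intro laplace_expansion_row[OF A]) simp
  also have "\<dots> = 0" using assms(2) by (simp add: A_def)
  finally obtain w where w: "w \<in> carrier_vec k" "w \<noteq> 0\<^sub>v k" "A *\<^sub>v w = 0\<^sub>v k"
    using det_0_iff_vec_prod_zero_field[OF A] by blast
  have "(\<Sum>m<k. C l m * w $ m) = 0" if "l \<in> L" for l
  proof -
    obtain r where r: "r < card L" "l = h r"
      using h \<open>l \<in> L\<close> unfolding bij_betw_def by (metis atLeastLessThan_iff imageE)
    have "(A *\<^sub>v w) $ r = 0" using w(3) r assms(2) by simp
    then show ?thesis using r assms(2) w(1) by (simp add: A_def scalar_prod_def atLeast0LessThan)
  qed
  then show ?thesis using w by blast
qed

lemma exists_row_mat_in_subspace:
  fixes V :: "'a :: field mat set"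
  assumes V: "mat_subspace n k V" and sp: "spans_modulo n k V L g"
    and L: "finite L" "card L < k" and i: "i < n"
  shows "\<exists>w\<in>carrier_vec k. w \<noteq> 0\<^sub>v k \<and> row_mat n k i w \<in> V"
proof -
  have "\<exists>v\<in>V. \<exists>a. single_mat n k i m = v + lincomb_mat n k L g a" for m
    using sp by (simp add: spans_modulo_def)
  then obtain v a where va: "\<And>m. v m \<in> V \<and> single_mat n k i m = v m + lincomb_mat n k L g (a m)"
    by metis
  have v: "v m $$ (r, c) = (if r = i \<and> c = m then 1 else 0) - (\<Sum>l\<in>L. a m l * g l $$ (r, c))"
    if "m < k" "r < n" "c < k" for m r c
  proof -
    have "single_mat n k i m $$ (r, c) = v m $$ (r, c) + (\<Sum>l\<in>L. a m l * g l $$ (r, c))"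
      using va[of m] that by simp
    moreover have "single_mat n k i m $$ (r, c) = (if r = i \<and> c = m then 1 else 0)"
      using that by (simp add: unit_vec_def)
    ultimately have "v m $$ (r, c) + (\<Sum>l\<in>L. a m l * g l $$ (r, c)) = (if r = i \<and> c = m then 1 else 0)"
      by (rule trans[OF sym])
    then show ?thesis by (simp only: eq_diff_eq)
  qed
  obtain w where w: "w \<in> carrier_vec k" "w \<noteq> 0\<^sub>v k" "\<forall>l\<in>L. (\<Sum>m<k. a m l * w $ m) = 0"
    using exists_nonzero_solution[OF L, of "\<lambda>l m. a m l"] by blast
  have "row_mat n k i w = lincomb_mat n k {..<k} v (\<lambda>m. w $ m)"
  proof (rule eq_matI)
    fix r c assume "r < dim_row (lincomb_mat n k {..<k} v (\<lambda>m. w $ m))"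
      and "c < dim_col (lincomb_mat n k {..<k} v (\<lambda>m. w $ m))"
    then have rc: "r < n" "c < k" by auto
    have "(\<Sum>m<k. w $ m * v m $$ (r, c)) =
        (\<Sum>m<k. if r = i \<and> c = m then w $ m else 0) - (\<Sum>l\<in>L. (\<Sum>m<k. a m l * w $ m) * g l $$ (r, c))"
      using rc by (simp add: v right_diff_distrib sum_subtractf sum_distrib_left sum_distrib_right
          sum.swap[of _ L] ac_simps if_distrib[of "\<lambda>x. _ * x"] cong: if_cong)
    also have "\<dots> = (if r = i then w $ c else 0)" using rc w(3) by auto
    finally show "row_mat n k i w $$ (r, c) = lincomb_mat n k {..<k} v (\<lambda>m. w $ m) $$ (r, c)"
      using rc by simp
  qed auto
  moreover have "lincomb_mat n k {..<k} v (\<lambda>m. w $ m) \<in> V"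
    using va by (intro mat_subspace_lincomb[OF V]) auto
  ultimately show ?thesis using w by auto
qed

lemma exists_inverse_pair_with_last_row:
  fixes w :: "'a :: field vec"
  assumes w: "w \<in> carrier_vec (Suc k)" "w \<noteq> 0\<^sub>v (Suc k)"
  shows "\<exists>B P. B \<in> carrier_mat (Suc k) (Suc k) \<and> P \<in> carrier_mat (Suc k) (Suc k) \<and>
    B * P = 1\<^sub>m (Suc k) \<and> P * B = 1\<^sub>m (Suc k) \<and> row B k = w"
proof -
  obtain m where m: "m < Suc k" "w $ m \<noteq> 0" using w by (metis eq_vecI carrier_vecD index_zero_vec)
  define B where "B = mat (Suc k) (Suc k)
    (\<lambda>(r, c). if r = k then w $ c else if c = (if r = m then k else r) then 1 else 0)"
  have B: "B \<in> carrier_mat (Suc k) (Suc k)" by (simp add: B_def)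
  have "v = 0\<^sub>v (Suc k)" if v: "v \<in> carrier_vec (Suc k)" "B *\<^sub>v v = 0\<^sub>v (Suc k)" for v
  proof -
    have row: "(\<Sum>c<Suc k. B $$ (r, c) * v $ c) = 0" if "r < Suc k" for r
      using arg_cong[OF v(2), of "\<lambda>u. u $ r"] that v(1)
      by (simp add: B_def scalar_prod_def atLeast0LessThan)
    have swapped: "v $ (if r = m then k else r) = 0" if r: "r < Suc k" "r \<noteq> k" for r
    proof -
      have "(\<Sum>c<Suc k. B $$ (r, c) * v $ c) = (\<Sum>c<Suc k. if c = (if r = m then k else r) then v $ c else 0)"
        using r by (intro sum.cong) (auto simp: B_def)
      then show ?thesis using row[OF r(1)] r m(1) by (simp split: if_splits)
    qed
    have other: "v $ c = 0" if "c < Suc k" "c \<noteq> m" for c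
      using swapped[of c] swapped[of m] that m(1) by (cases "c = k") auto
    have "(\<Sum>c<Suc k. B $$ (k, c) * v $ c) = (\<Sum>c<Suc k. if c = m then w $ m * v $ m else 0)"
      using other by (intro sum.cong) (auto simp: B_def)
    then have "(\<Sum>c<Suc k. B $$ (k, c) * v $ c) = w $ m * v $ m" using m(1) by simp
    then have "v $ m = 0" using row[of k] m(2) by simp
    then show ?thesis using other v(1) by (intro eq_vecI) auto
  qed
  then have "det B \<noteq> 0" using det_0_iff_vec_prod_zero_field[OF B] by blast
  from det_non_zero_imp_unit[OF B this, of "()"]
  obtain P where "P \<in> carrier_mat (Suc k) (Suc k)" "B * P = 1\<^sub>m (Suc k)" "P * B = 1\<^sub>m (Suc k)"
    by (auto simp: Units_def ring_mat_def)
  moreover have "row B k = w" using w(1) by (intro eq_vecI) (auto simp: B_def)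
  ultimately show ?thesis using B by blast
qed

lemma mat_subspace_image:
  assumes V: "mat_subspace n k V"
    and carrier: "\<And>x. x \<in> V \<Longrightarrow> f x \<in> carrier_mat n' k'" and zero: "f (0\<^sub>m n k) = 0\<^sub>m n' k'"
    and add: "\<And>x y. x \<in> V \<Longrightarrow> y \<in> V \<Longrightarrow> f (x + y) = f x + f y"
    and smult: "\<And>a x. x \<in> V \<Longrightarrow> f (a \<cdot>\<^sub>m x) = a \<cdot>\<^sub>m f x"
  shows "mat_subspace n' k' (f ` V)"
proof -
  have "0\<^sub>m n' k' \<in> f ` V" using zero mat_subspaceD(2)[OF V] by (metis image_eqI)
  moreover have "f x + f y \<in> f ` V" if "x \<in> V" "y \<in> V" for x y
    using add[OF that] mat_subspaceD(3)[OF V that] by (metis image_eqI)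
  moreover have "a \<cdot>\<^sub>m f x \<in> f ` V" if "x \<in> V" for a x
    using smult[OF that] mat_subspaceD(4)[OF V that] by (metis image_eqI)
  ultimately show ?thesis using carrier by (auto simp: mat_subspace_def)
qed

lemma mat_subspace_mult_right:
  assumes V: "mat_subspace n k V" and P: "P \<in> carrier_mat k k"
  shows "mat_subspace n k ((\<lambda>X. X * P) ` V)"
proof (rule mat_subspace_image[OF V])
  have VC: "x \<in> carrier_mat n k" if "x \<in> V" for x using mat_subspaceD(1)[OF V] that by blast
  show "(x + y) * P = x * P + y * P" if "x \<in> V" "y \<in> V" for x y
    using VC[OF that(1)] VC[OF that(2)] P by (simp add: add_mult_distrib_mat)
  show "(a \<cdot>\<^sub>m x) * P = a \<cdot>\<^sub>m (x * P)" if "x \<in> V" for a x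
    using VC[OF that] P by (simp add: mult_smult_assoc_mat)
qed (use P mat_subspaceD(1)[OF V] in auto)

lemma mat_subspace_mat_delete:
  assumes V: "mat_subspace (Suc n) (Suc k) V"
  shows "mat_subspace n k ((\<lambda>X. mat_delete X n k) ` V)"
proof (rule mat_subspace_image[OF V])
  have VC: "x \<in> carrier_mat (Suc n) (Suc k)" if "x \<in> V" for x
    using mat_subspaceD(1)[OF V] that by blast
  show "mat_delete x n k \<in> carrier_mat n k" if "x \<in> V" for x
    using mat_delete_carrier[OF VC[OF that]] by simp
  show "mat_delete (x + y) n k = mat_delete x n k + mat_delete y n k" if "x \<in> V" "y \<in> V" for x y
    by (rule mat_delete_add[OF VC[OF that(1)] VC[OF that(2)]])
  show "mat_delete (a \<cdot>\<^sub>m x) n k = a \<cdot>\<^sub>m mat_delete x n k" if "x \<in> V" for a x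
    using VC[OF that] by (intro eq_matI) (auto simp: mat_delete_def)
qed (auto simp: mat_delete_def)

lemma lincomb_mat_mult:
  assumes "g ` L \<subseteq> carrier_mat n k" and P: "P \<in> carrier_mat k k"
  shows "lincomb_mat n k L g a * P = lincomb_mat n k L (\<lambda>l. g l * P) a"
proof (rule eq_matI)
  fix i j assume "i < dim_row (lincomb_mat n k L (\<lambda>l. g l * P) a)"
    and "j < dim_col (lincomb_mat n k L (\<lambda>l. g l * P) a)"
  then have ij: "i < n" "j < k" by auto
  have "(lincomb_mat n k L g a * P) $$ (i, j) = (\<Sum>m<k. (\<Sum>l\<in>L. a l * g l $$ (i, m)) * P $$ (m, j))"
    using P ij by (simp add: scalar_prod_def atLeast0LessThan)
  also have "\<dots> = (\<Sum>l\<in>L. a l * (\<Sum>m<k. g l $$ (i, m) * P $$ (m, j)))"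
    by (simp add: sum_distrib_left sum_distrib_right sum.swap[of _ L] ac_simps)
  also have "\<dots> = lincomb_mat n k L (\<lambda>l. g l * P) a $$ (i, j)"
    using assms ij by (auto simp: scalar_prod_def atLeast0LessThan intro!: sum.cong)
  finally show "(lincomb_mat n k L g a * P) $$ (i, j) = lincomb_mat n k L (\<lambda>l. g l * P) a $$ (i, j)" .
qed (use P in auto)

lemma spans_modulo_mult_right:
  assumes sp: "spans_modulo n k V L g" and V: "V \<subseteq> carrier_mat n k"
    and B: "B \<in> carrier_mat k k" and P: "P \<in> carrier_mat k k" and BP: "B * P = 1\<^sub>m k"
  shows "spans_modulo n k ((\<lambda>X. X * P) ` V) L (\<lambda>l. g l * P)"
  unfolding spans_modulo_def
proof (intro conjI ballI)
  have gL: "g ` L \<subseteq> carrier_mat n k" using sp by (simp add: spans_modulo_def)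
  then show "(\<lambda>l. g l * P) ` L \<subseteq> carrier_mat n k" using P by auto
  fix Y :: "'a mat" assume Y: "Y \<in> carrier_mat n k"
  obtain v a where v: "v \<in> V" "Y * B = v + lincomb_mat n k L g a"
    using spans_moduloE[OF sp mult_carrier_mat[OF Y B]] .
  have "Y = Y * B * P" using Y B P BP by simp
  also have "\<dots> = v * P + lincomb_mat n k L (\<lambda>l. g l * P) a"
    using v V P by (simp add: add_mult_distrib_mat[of v n k] lincomb_mat_mult[OF gL P] subsetD)
  finally show "\<exists>v\<in>(\<lambda>X. X * P) ` V. \<exists>a. Y = v + lincomb_mat n k L (\<lambda>l. g l * P) a"
    using v(1) by blast
qed

lemma mem_image_mult_right_iff:
  fixes X :: "'a :: semiring_1 mat"
  assumes V: "V \<subseteq> carrier_mat n k" and X: "X \<in> carrier_mat n k"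
    and B: "B \<in> carrier_mat k k" and P: "P \<in> carrier_mat k k"
    and BP: "B * P = 1\<^sub>m k" and PB: "P * B = 1\<^sub>m k"
  shows "X \<in> (\<lambda>X. X * P) ` V \<longleftrightarrow> X * B \<in> V"
proof
  assume "X \<in> (\<lambda>X. X * P) ` V"
  then obtain x where "x \<in> V" "X = x * P" by blast
  moreover have "x * P * B = x" if "x \<in> V" for x
  proof -
    have "x \<in> carrier_mat n k" using that V by blast
    then show ?thesis using P B PB by (simp add: assoc_mult_mat[of x n k P k B] right_mult_one_mat)
  qed
  ultimately show "X * B \<in> V" by simp
next
  assume "X * B \<in> V"
  moreover have "X * B * P = X" using X B P BP by simp
  ultimately show "X \<in> (\<lambda>X. X * P) ` V" by (metis image_eqI)
qed

lemma spans_modulo_mat_delete: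
  fixes V :: "'a :: field mat set"
  assumes V: "mat_subspace (Suc n) (Suc k) V" and sp: "spans_modulo (Suc n) (Suc k) V L g"
    and "finite L" and X: "X \<in> carrier_mat (Suc n) (Suc k)" "mat_delete X n k = 0\<^sub>m n k" "X \<notin> V"
  shows "\<exists>l\<in>L. spans_modulo n k ((\<lambda>Y. mat_delete Y n k) ` V) (L - {l}) (\<lambda>l. mat_delete (g l) n k)"
proof -
  have VC: "x \<in> carrier_mat (Suc n) (Suc k)" if "x \<in> V" for x using mat_subspaceD(1)[OF V] that by blast
  have gL: "g ` L \<subseteq> carrier_mat (Suc n) (Suc k)" using sp by (simp add: spans_modulo_def)
  obtain v0 a0 where v0: "v0 \<in> V" "X = v0 + lincomb_mat (Suc n) (Suc k) L g a0"
    using spans_moduloE[OF sp X(1)] .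
  have "\<exists>l0\<in>L. a0 l0 \<noteq> 0"
  proof (rule ccontr)
    assume "\<not> (\<exists>l0\<in>L. a0 l0 \<noteq> 0)"
    then have "lincomb_mat (Suc n) (Suc k) L g a0 = 0\<^sub>m (Suc n) (Suc k)"
      by (intro eq_matI) (auto intro: sum.neutral)
    then show False using v0 X(3) VC[OF v0(1)] by simp
  qed
  then obtain l0 where l0: "l0 \<in> L" "a0 l0 \<noteq> 0" ..
  have X0: "v0 $$ (p, q) + (\<Sum>l\<in>L. a0 l * g l $$ (p, q)) = 0" if "p < n" "q < k" for p q
    using arg_cong[OF X(2), of "\<lambda>M. M $$ (p, q)"] that X(1) VC[OF v0(1)] by (simp add: v0(2))
  have "\<exists>v\<in>(\<lambda>Y. mat_delete Y n k) ` V. \<exists>b. Y = v + lincomb_mat n k (L - {l0}) (\<lambda>l. mat_delete (g l) n k) b"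
    if Y: "Y \<in> carrier_mat n k" for Y
  proof -
    obtain Z where Z: "Z \<in> carrier_mat (Suc n) (Suc k)" "mat_delete Z n k = Y" using mat_delete_surj[OF Y] by blast
    obtain v a where v: "v \<in> V" "Z = v + lincomb_mat (Suc n) (Suc k) L g a" using spans_moduloE[OF sp Z(1)] .
    define \<tau> where "\<tau> = a l0 / a0 l0"
    define b where "b l = a l - \<tau> * a0 l" for l
    have "b l0 = 0" using l0(2) by (simp add: b_def \<tau>_def)
    then have "(\<Sum>l\<in>L - {l0}. b l * x l) = (\<Sum>l\<in>L. b l * x l)" for x
      using l0(1) \<open>finite L\<close> by (simp add: sum_diff1)
    then have b: "(\<Sum>l\<in>L - {l0}. b l * x l) = (\<Sum>l\<in>L. a l * x l) - \<tau> * (\<Sum>l\<in>L. a0 l * x l)" for x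
      unfolding b_def by (simp add: left_diff_distrib sum_subtractf sum_distrib_left mult.assoc)
    have "Y = mat_delete (v + (- \<tau>) \<cdot>\<^sub>m v0) n k + lincomb_mat n k (L - {l0}) (\<lambda>l. mat_delete (g l) n k) b"
    proof (rule eq_matI)
      fix p q assume "p < dim_row (mat_delete (v + (- \<tau>) \<cdot>\<^sub>m v0) n k + lincomb_mat n k (L - {l0}) (\<lambda>l. mat_delete (g l) n k) b)"
        and "q < dim_col (mat_delete (v + (- \<tau>) \<cdot>\<^sub>m v0) n k + lincomb_mat n k (L - {l0}) (\<lambda>l. mat_delete (g l) n k) b)"
      then have pq: "p < n" "q < k" by auto
      have "(\<Sum>l\<in>L - {l0}. b l * mat_delete (g l) n k $$ (p, q)) = (\<Sum>l\<in>L - {l0}. b l * g l $$ (p, q))"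
        using gL pq by (intro sum.cong) auto
      then have "(mat_delete (v + (- \<tau>) \<cdot>\<^sub>m v0) n k + lincomb_mat n k (L - {l0}) (\<lambda>l. mat_delete (g l) n k) b) $$ (p, q)
          = v $$ (p, q) + (\<Sum>l\<in>L. a l * g l $$ (p, q)) - \<tau> * (v0 $$ (p, q) + (\<Sum>l\<in>L. a0 l * g l $$ (p, q)))"
        using pq VC[OF v(1)] VC[OF v0(1)] by (simp add: b algebra_simps)
      also have "\<dots> = Y $$ (p, q)"
        using arg_cong[OF v(2), of "\<lambda>M. M $$ (p, q)"] X0[OF pq] pq Z VC[OF v(1)] by auto
      finally show "Y $$ (p, q) = (mat_delete (v + (- \<tau>) \<cdot>\<^sub>m v0) n k + lincomb_mat n k (L - {l0}) (\<lambda>l. mat_delete (g l) n k) b) $$ (p, q)"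
        by simp
    qed (use Y in auto)
    moreover have "v + (- \<tau>) \<cdot>\<^sub>m v0 \<in> V" using v(1) v0(1) by (intro mat_subspaceD[OF V])
    ultimately show ?thesis by blast
  qed
  moreover have "(\<lambda>l. mat_delete (g l) n k) ` (L - {l0}) \<subseteq> carrier_mat n k"
    using gL mat_delete_carrier[of _ "Suc n" "Suc k"] by fastforce
  ultimately show ?thesis using l0(1) by (auto simp: spans_modulo_def)
qed

lemma exists_smaller_spans_modulo_mat_delete:
  fixes V :: "'a :: field mat set" and g :: "'b \<Rightarrow> 'a mat"
  assumes V: "mat_subspace (Suc n) (Suc k) V" and sp: "spans_modulo (Suc n) (Suc k) V L g"
    and L: "finite L"
    and alt: "V = carrier_mat (Suc n) (Suc k) \<or>
      (\<exists>X\<in>carrier_mat (Suc n) (Suc k). mat_delete X n k = 0\<^sub>m n k \<and> X \<notin> V)"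
  shows "\<exists>L' (g' :: 'b \<Rightarrow> 'a mat). finite L' \<and> card L' \<le> card L - 1 \<and>
    spans_modulo n k ((\<lambda>X. mat_delete X n k) ` V) L' g'"
  using alt
proof
  assume "V = carrier_mat (Suc n) (Suc k)"
  then have "Y \<in> (\<lambda>X. mat_delete X n k) ` V" if "Y \<in> carrier_mat n k" for Y
    using mat_delete_surj[OF that] by blast
  then have "spans_modulo n k ((\<lambda>X. mat_delete X n k) ` V) {} g"
    by (force simp: spans_modulo_def intro!: eq_matI)
  then show ?thesis by fastforce
next
  assume "\<exists>X\<in>carrier_mat (Suc n) (Suc k). mat_delete X n k = 0\<^sub>m n k \<and> X \<notin> V"
  then obtain l where "l \<in> L"
    and "spans_modulo n k ((\<lambda>Y. mat_delete Y n k) ` V) (L - {l}) (\<lambda>l. mat_delete (g l) n k)"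
    using spans_modulo_mat_delete[OF V sp L] by blast
  then show ?thesis using L by (intro exI[of _ "L - {l}"] exI) simp
qed

lemma exists_column_change:
  fixes V :: "'a :: field mat set"
  assumes V: "mat_subspace (Suc n) (Suc k) V" and sp: "spans_modulo (Suc n) (Suc k) V L g"
    and L: "finite L" "card L < Suc k"
  shows "\<exists>B P. B \<in> carrier_mat (Suc k) (Suc k) \<and> P \<in> carrier_mat (Suc k) (Suc k) \<and>
    B * P = 1\<^sub>m (Suc k) \<and> P * B = 1\<^sub>m (Suc k) \<and> single_mat (Suc n) (Suc k) n k * B \<in> V \<and>
    (V = carrier_mat (Suc n) (Suc k) \<or>
     (\<exists>X\<in>carrier_mat (Suc n) (Suc k). mat_delete X n k = 0\<^sub>m n k \<and> X * B \<notin> V))"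
proof (cases "\<forall>m<Suc k. single_mat (Suc n) (Suc k) n m \<in> V")
  case False
  then obtain m where m: "m < Suc k" "single_mat (Suc n) (Suc k) n m \<notin> V" by blast
  obtain w where w: "w \<in> carrier_vec (Suc k)" "w \<noteq> 0\<^sub>v (Suc k)" "row_mat (Suc n) (Suc k) n w \<in> V"
    using exists_row_mat_in_subspace[OF V sp L, of n] by blast
  obtain B P where BP: "B \<in> carrier_mat (Suc k) (Suc k)" "P \<in> carrier_mat (Suc k) (Suc k)"
    "B * P = 1\<^sub>m (Suc k)" "P * B = 1\<^sub>m (Suc k)" "row B k = w"
    using exists_inverse_pair_with_last_row[OF w(1,2)] by blast
  let ?X = "single_mat (Suc n) (Suc k) n m * P"
  have "?X * B = single_mat (Suc n) (Suc k) n m"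
    using BP by (simp add: assoc_mult_mat[of _ "Suc n" "Suc k" P "Suc k" B])
  moreover have "mat_delete ?X n k = 0\<^sub>m n k"
    using BP m(1) by (intro mat_delete_eq_0) (auto simp: single_mat_mult)
  moreover have "single_mat (Suc n) (Suc k) n k * B \<in> V" using BP w by (simp add: single_mat_mult)
  ultimately show ?thesis using BP m(2) by (metis mult_carrier_mat row_mat_carrier)
next
  case True
  obtain i j where ij: "i < Suc n" "j < Suc k"
    and alt: "V = carrier_mat (Suc n) (Suc k) \<or> single_mat (Suc n) (Suc k) i j \<notin> V"
    using mat_subspace_eq_carrierI[OF V] by blast
  have "unit_vec (Suc k) j \<in> carrier_vec (Suc k)" "unit_vec (Suc k) j \<noteq> (0\<^sub>v (Suc k) :: 'a vec)"
    using ij(2) by auto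
  from exists_inverse_pair_with_last_row[OF this] obtain B P :: "'a mat" where BP:
    "B \<in> carrier_mat (Suc k) (Suc k)" "P \<in> carrier_mat (Suc k) (Suc k)"
    "B * P = 1\<^sub>m (Suc k)" "P * B = 1\<^sub>m (Suc k)" "row B k = unit_vec (Suc k) j"
    by blast
  have "single_mat (Suc n) (Suc k) n k * B \<in> V" using BP True ij by (simp add: single_mat_mult)
  moreover have "single_mat (Suc n) (Suc k) i k * B = single_mat (Suc n) (Suc k) i j"
    using BP by (simp add: single_mat_mult)
  moreover have "mat_delete (single_mat (Suc n) (Suc k) i k) n k = 0\<^sub>m n k"
    by (intro mat_delete_eq_0) auto
  ultimately show ?thesis using BP alt by (metis row_mat_carrier)
qed

lemma cullis_det_nonzero_by_corner:
  fixes V :: "'a :: comm_ring_1 mat set"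
  assumes V: "mat_subspace (Suc n) (Suc k) V" and E: "single_mat (Suc n) (Suc k) n k \<in> V"
    and "k \<le> n" and s: "s \<in> carrier_mat (Suc n) (Suc k)"
    and v: "v \<in> V" and nz: "cullis_det n k (mat_delete (s + v) n k) \<noteq> 0"
  shows "\<exists>v\<in>V. cullis_det (Suc n) (Suc k) (s + v) \<noteq> 0"
proof (cases "cullis_det (Suc n) (Suc k) (s + v) = 0")
  case True
  have vc: "v \<in> carrier_mat (Suc n) (Suc k)" using v mat_subspaceD(1)[OF V] by blast
  then have sv: "s + v \<in> carrier_mat (Suc n) (Suc k)" using s by simp
  have "s + (v + 1 \<cdot>\<^sub>m single_mat (Suc n) (Suc k) n k) = (s + v) + 1 \<cdot>\<^sub>m single_mat (Suc n) (Suc k) n k"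
    using s vc by simp
  then have "cullis_det (Suc n) (Suc k) (s + (v + 1 \<cdot>\<^sub>m single_mat (Suc n) (Suc k) n k)) \<noteq> 0"
    using cullis_det_add_corner[OF sv \<open>k \<le> n\<close>, of 1] True nz by (simp add: minus_one_power_iff)
  moreover have "v + 1 \<cdot>\<^sub>m single_mat (Suc n) (Suc k) n k \<in> V" using v E by (intro mat_subspaceD[OF V])
  ultimately show ?thesis by blast
qed (use v in blast)

lemma exists_column_change_reducing_codim:
  fixes V :: "'a :: field mat set" and g :: "'b \<Rightarrow> 'a mat"
  assumes V: "mat_subspace (Suc n) (Suc k) V" and sp: "spans_modulo (Suc n) (Suc k) V L g"
    and L: "finite L" "card L < Suc k"
  shows "\<exists>P\<in>carrier_mat (Suc k) (Suc k). single_mat (Suc n) (Suc k) n k \<in> (\<lambda>X. X * P) ` V \<and>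
    (\<exists>L' (g' :: 'b \<Rightarrow> 'a mat). finite L' \<and> card L' \<le> card L - 1 \<and>
      spans_modulo n k ((\<lambda>X. mat_delete X n k) ` (\<lambda>X. X * P) ` V) L' g')"
proof -
  have VC: "V \<subseteq> carrier_mat (Suc n) (Suc k)" using mat_subspaceD(1)[OF V] .
  obtain B P where B: "B \<in> carrier_mat (Suc k) (Suc k)" and P: "P \<in> carrier_mat (Suc k) (Suc k)"
    and BP: "B * P = 1\<^sub>m (Suc k)" "P * B = 1\<^sub>m (Suc k)"
    and E: "single_mat (Suc n) (Suc k) n k * B \<in> V"
    and alt: "V = carrier_mat (Suc n) (Suc k) \<or>
      (\<exists>X\<in>carrier_mat (Suc n) (Suc k). mat_delete X n k = 0\<^sub>m n k \<and> X * B \<notin> V)"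
    using exists_column_change[OF V sp L] by blast
  let ?V = "(\<lambda>X. X * P) ` V"
  have V': "mat_subspace (Suc n) (Suc k) ?V" by (rule mat_subspace_mult_right[OF V P])
  have mem: "X \<in> ?V \<longleftrightarrow> X * B \<in> V" if "X \<in> carrier_mat (Suc n) (Suc k)" for X
    using mem_image_mult_right_iff[OF VC that B P BP] .
  have "\<exists>L' (g' :: 'b \<Rightarrow> 'a mat). finite L' \<and> card L' \<le> card L - 1 \<and>
      spans_modulo n k ((\<lambda>X. mat_delete X n k) ` ?V) L' g'"
  proof (rule exists_smaller_spans_modulo_mat_delete[OF V' _ L(1)])
    show "spans_modulo (Suc n) (Suc k) ?V L (\<lambda>l. g l * P)"
      by (rule spans_modulo_mult_right[OF sp VC B P BP(1)])
    show "?V = carrier_mat (Suc n) (Suc k) \<or>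
        (\<exists>X\<in>carrier_mat (Suc n) (Suc k). mat_delete X n k = 0\<^sub>m n k \<and> X \<notin> ?V)"
      using alt mem mat_subspaceD(1)[OF V'] B by auto
  qed
  moreover have "single_mat (Suc n) (Suc k) n k \<in> ?V" unfolding mem[OF row_mat_carrier] by (rule E)
  ultimately show ?thesis using P by blast
qed

lemma cullis_det_nonzero_in_coset_mult_right:
  assumes V: "V \<subseteq> carrier_mat n k" and s: "s \<in> carrier_mat n k" and P: "P \<in> carrier_mat k k"
    and u: "u \<in> (\<lambda>X. X * P) ` V" and nz: "cullis_det n k (s * P + u) \<noteq> 0"
  shows "\<exists>v\<in>V. cullis_det n k (s + v) \<noteq> 0"
proof -
  obtain v where v: "v \<in> V" "u = v * P" using u by blast
  then have "s * P + u = (s + v) * P" using s P V by (simp add: add_mult_distrib_mat[of s _ _ v] subsetD)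
  then have "cullis_det n k (s + v) * det P \<noteq> 0"
    using nz cullis_det_mult[of "s + v" n k P] s P v(1) V by auto
  then have "cullis_det n k (s + v) \<noteq> 0" by (metis mult_zero_left)
  then show ?thesis using v(1) by blast
qed

lemma cullis_det_nonzero_in_coset:
  fixes V :: "'a :: field mat set" and g :: "'b \<Rightarrow> 'a mat"
  assumes "k \<le> n" and "mat_subspace n k V" and "spans_modulo n k V L g"
    and "finite L" and "card L < k" and "s \<in> carrier_mat n k"
  shows "\<exists>v\<in>V. cullis_det n k (s + v) \<noteq> 0"
  using assms
proof (induction k arbitrary: n V L g s)
  case 0
  then show ?case by simp
next
  case (Suc k)
  then obtain n' where n: "n = Suc n'" by (cases n) auto
  have V: "mat_subspace (Suc n') (Suc k) V" and sp: "spans_modulo (Suc n') (Suc k) V L g"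
    and s: "s \<in> carrier_mat (Suc n') (Suc k)" and "k \<le> n'"
    using Suc.prems n by auto
  obtain P L' and g' :: "'b \<Rightarrow> 'a mat" where P: "P \<in> carrier_mat (Suc k) (Suc k)"
    and E: "single_mat (Suc n') (Suc k) n' k \<in> (\<lambda>X. X * P) ` V"
    and L': "finite L'" "card L' \<le> card L - 1"
    and sp': "spans_modulo n' k ((\<lambda>X. mat_delete X n' k) ` (\<lambda>X. X * P) ` V) L' g'"
    using exists_column_change_reducing_codim[OF V sp Suc.prems(4,5)] by blast
  let ?V = "(\<lambda>X. X * P) ` V"
  have V': "mat_subspace (Suc n') (Suc k) ?V" by (rule mat_subspace_mult_right[OF V P])
  have "\<exists>u\<in>?V. cullis_det n' k (mat_delete (s * P + u) n' k) \<noteq> 0"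
  proof (cases "k = 0")
    case True
    then show ?thesis using mat_subspaceD(2)[OF V'] by auto
  next
    case False
    then have "card L' < k" using L'(2) Suc.prems(5) by linarith
    from Suc.IH[OF \<open>k \<le> n'\<close> mat_subspace_mat_delete[OF V'] sp' L'(1) this, of "mat_delete (s * P) n' k"]
    obtain u where u: "u \<in> ?V" "cullis_det n' k (mat_delete (s * P) n' k + mat_delete u n' k) \<noteq> 0"
      using s P mat_delete_carrier[of "s * P" "Suc n'" "Suc k"] by auto
    have split: "mat_delete (s * P + u) n' k = mat_delete (s * P) n' k + mat_delete u n' k"
      using s P u(1) mat_subspaceD(1)[OF V'] by (intro mat_delete_add) auto
    have "cullis_det n' k (mat_delete (s * P + u) n' k) \<noteq> 0" unfolding split by (rule u(2))
    then show ?thesis using u(1) by blast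
  qed
  then obtain u where "u \<in> ?V" "cullis_det n' k (mat_delete (s * P + u) n' k) \<noteq> 0" ..
  from cullis_det_nonzero_by_corner[OF V' E \<open>k \<le> n'\<close> mult_carrier_mat[OF s P] this]
  obtain u where "u \<in> ?V" "cullis_det (Suc n') (Suc k) (s * P + u) \<noteq> 0" by blast
  then show ?case
    using cullis_det_nonzero_in_coset_mult_right[OF mat_subspaceD(1)[OF V] s P] n by blast
qed

lemma mat_subspace_of_subspace:
  fixes V :: "'a :: field mat set"
  assumes "VectorSpace.subspace class_ring V (module_mat TYPE('a) n k)"
  shows "mat_subspace n k V"
proof -
  have "submodule class_ring V (module_mat TYPE('a) n k)"
    using assms by (simp add: VectorSpace.subspace_def)
  then show ?thesis
    unfolding submodule_def mat_subspace_def by (simp add: module_mat_simps)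
qed

context matrix_vs
begin

lemma lincomb_eq_lincomb_mat:
  assumes "finite C" and "C \<subseteq> carrier_mat nr nc"
  shows "lincomb a C = lincomb_mat nr nc C id a"
  using assms
proof (induction C rule: finite_induct)
  case empty
  then show ?case by (intro eq_matI) auto
next
  case (insert x C)
  have "lincomb a (insert x C) = a x \<cdot>\<^sub>m x + lincomb a C"
    using lincomb_insert[of C a x] insert by simp
  also have "\<dots> = lincomb_mat nr nc (insert x C) id a"
    using insert by (intro eq_matI) auto
  finally show ?case .
qed

lemma span_single_mats:
  "span ((\<lambda>(i, j). single_mat nr nc i j) ` ({..<nr} \<times> {..<nc})) = carrier_mat nr nc"
  (is "span ?U = _")
proof -
  have U: "?U \<subseteq> carrier_mat nr nc" by auto
  have "mat_subspace nr nc (span ?U)"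
    by (rule mat_subspace_of_subspace[OF span_is_subspace[OF U]])
  moreover have "single_mat nr nc i j \<in> span ?U" if "i < nr" "j < nc" for i j
    using in_own_span[OF U] that by blast
  ultimately show ?thesis by (rule mat_subspace_eq_carrierI)
qed

lemma subspace_spanned_by_indep_set:
  assumes W: "VectorSpace.subspace class_ring W V"
  shows "\<exists>\<beta>. finite \<beta> \<and> \<beta> \<subseteq> W \<and> lin_indpt \<beta> \<and> span \<beta> = W"
proof -
  let ?U = "(\<lambda>(i, j). single_mat nr nc i j :: 'a mat) ` ({..<nr} \<times> {..<nc})"
  have U: "?U \<subseteq> carrier_mat nr nc" "finite ?U" by auto
  have fd: "fin_dim" unfolding fin_dim_def using U span_single_mats by blast
  have submod: "submodule class_ring W V" using W unfolding VectorSpace.subspace_def by auto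
  have WC: "W \<subseteq> carrier_mat nr nc" using mat_subspaceD(1)[OF mat_subspace_of_subspace[OF W]] .
  let ?P = "\<lambda>A. A \<subseteq> W \<and> lin_indpt A"
  have bound: "finite A \<and> card A \<le> card ?U" if "?P A" for A
  proof -
    have AC: "A \<subseteq> carrier_mat nr nc" using that WC by blast
    have fA: "finite A" using fin_dim_li_fin[OF fd _ AC] that by blast
    then show ?thesis using li_smaller_than_gen[OF fA U(2) AC U(1) _ span_single_mats] that by blast
  qed
  have P0: "?P {}" by (simp add: lin_dep_def)
  obtain \<beta> where \<beta>: "finite \<beta>" "maximal \<beta> ?P"
    using maximal_exists[of ?P "card ?U" "{}", OF bound P0] by blast
  have \<beta>W: "\<beta> \<subseteq> W" and li: "lin_indpt \<beta>" using \<beta>(2) unfolding maximal_def by auto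
  have \<beta>C: "\<beta> \<subseteq> carrier_mat nr nc" using \<beta>W WC by blast
  have "W \<subseteq> span \<beta>"
  proof
    fix v assume v: "v \<in> W"
    show "v \<in> span \<beta>"
    proof (rule ccontr)
      assume nv: "v \<notin> span \<beta>"
      then have vn: "v \<notin> \<beta>" using in_own_span[OF \<beta>C] by blast
      have vC: "v \<in> carrier_mat nr nc" using v WC by blast
      have "lin_indpt (\<beta> \<union> {v})" using lin_dep_iff_in_span[OF \<beta>C li _ vn] vC nv by simp
      then have "\<beta> \<union> {v} = \<beta>" using \<beta>(2) \<beta>W v unfolding maximal_def by blast
      then show False using vn by blast
    qed
  qed
  moreover have "span \<beta> \<subseteq> W" by (rule span_is_subset[OF \<beta>W submod])
  ultimately show ?thesis using \<beta>(1) \<beta>W li by blast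
qed

lemma exists_spans_modulo:
  assumes W: "VectorSpace.subspace class_ring W V"
  shows "\<exists>C. finite C \<and> card C + vectorspace.dim class_ring (vs W) \<le> nr * nc \<and> spans_modulo nr nc W C id"
proof -
  let ?U = "(\<lambda>(i, j). single_mat nr nc i j :: 'a mat) ` ({..<nr} \<times> {..<nc})"
  have U: "?U \<subseteq> carrier_mat nr nc" "finite ?U" by auto
  have Ucard: "card ?U \<le> nr * nc"
    using card_image_le[of "{..<nr} \<times> {..<nc}" "\<lambda>(i, j). single_mat nr nc i j :: 'a mat"]
    by (simp add: card_cartesian_product)
  obtain \<beta> where \<beta>: "finite \<beta>" "\<beta> \<subseteq> W" "lin_indpt \<beta>" "span \<beta> = W"
    using subspace_spanned_by_indep_set[OF W] by blast
  have submod: "submodule class_ring W V" using W unfolding VectorSpace.subspace_def by auto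
  have \<beta>C: "\<beta> \<subseteq> carrier_mat nr nc"
    using \<beta>(2) mat_subspaceD(1)[OF mat_subspace_of_subspace[OF W]] by blast
  have gen: "LinearCombinations.module.span class_ring (vs W) \<beta> = W"
    using span_li_not_depend(1)[OF \<beta>(2) submod] \<beta>(4) by simp
  have dim: "vectorspace.dim class_ring (vs W) \<le> card \<beta>"
    by (rule vectorspace.gen_ge_dim[OF subspace_is_vs[OF W] \<beta>(1)]) (use \<beta>(2) gen in auto)
  have "\<beta> \<subseteq> span ?U" using \<beta>C span_single_mats by simp
  then obtain C where C: "finite C" "C \<subseteq> carrier_mat nr nc"
    "int (card C) \<le> int (card ?U) - int (card \<beta>)" "span (\<beta> \<union> C) = span ?U"
    using replacement[OF \<beta>(1) U(2) U(1) \<beta>(3)] by auto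
  have "spans_modulo nr nc W C id"
    unfolding spans_modulo_def
  proof (intro conjI ballI)
    show "id ` C \<subseteq> carrier_mat nr nc" using C(2) by simp
    fix Y :: "'a mat" assume "Y \<in> carrier_mat nr nc"
    then have "Y \<in> span (\<beta> \<union> C)" using C(4) span_single_mats by simp
    also have "span (\<beta> \<union> C) = submodule_sum (span \<beta>) (span C)"
      by (rule span_union_is_sum[OF \<beta>C C(2)])
    finally obtain x y where xy: "x \<in> span \<beta>" "y \<in> span C" "Y = x + y"
      unfolding submodule_sum_def by auto
    from xy(2) obtain a where "y = lincomb a C" using finite_span[OF C(1) C(2)] by auto
    then have "y = lincomb_mat nr nc C id a" using lincomb_eq_lincomb_mat[OF C(1,2)] by simp
    then show "\<exists>v\<in>W. \<exists>a. Y = v + lincomb_mat nr nc C id a" using xy \<beta>(4) by blast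
  qed
  moreover have "card C + card \<beta> \<le> nr * nc" using C(3) Ucard by linarith
  ultimately show ?thesis using C(1) dim by (intro exI[of _ C]) auto
qed

end

theorem mainTheorem2:
  fixes n k :: nat and s :: "'a :: field mat" and V :: "'a mat set"
  assumes "1 \<le> k" and "k \<le> n"
    and "VectorSpace.subspace (class_ring :: 'a ring) V (module_mat TYPE('a) n k)"
    and "s \<in> carrier_mat n k"
    and "\<forall>X \<in> (\<lambda>v. s + v) ` V. cullis_det n k X = 0"
  shows "codim_mat TYPE('a) n k V \<ge> k"
proof (rule ccontr)
  assume "\<not> k \<le> codim_mat TYPE('a) n k V"
  interpret matrix_vs n k "TYPE('a)" .
  obtain C where C: "finite C" "card C + vectorspace.dim class_ring (vs V) \<le> n * k"
    "spans_modulo n k V C id"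
    using exists_spans_modulo[OF assms(3)] by blast
  have "card C < k" using C(2) \<open>\<not> k \<le> codim_mat TYPE('a) n k V\<close> unfolding codim_mat_def by linarith
  then obtain v where "v \<in> V" "cullis_det n k (s + v) \<noteq> 0"
    using cullis_det_nonzero_in_coset[OF assms(2) mat_subspace_of_subspace[OF assms(3)] C(3) C(1)] assms(4)
    by blast
  then show False using assms(5) by blast
qed

end
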